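(* Fix a full realization $\mathbf{y}_{\mathcal{W}}$ of the profiles. The allocation policy of \textsc{SeqTGreedy} (defined in the context) is monotone: for every user $i$ and every fixed bids $b_{-i}$ of the other users, if $b'_i\le b_i$ and $i$ is selected when the bids are $(b_i,b_{-i})$, then $i$ is also selected when the bids are $(b'_i,b_{-i})$.
   Context: Setting. $\mathcal{V}$ is a finite set and $f:2^{\mathcal{V}}\to\mathbb{R}_{\ge0}$ is monotone and submodular. $\mathcal{W}$ is a finite set of users and $\mathcal{O}\subseteq 2^{\mathcal{V}}$. Each user $w$ has a random sensing profile $Y_w$ with values in $\mathcal{O}$; the $Y_w$ are independent with known distributions. For $\mathcal{S}\subseteq\mathcal{W}$ and values $y_s$, write $\mathbf{y}_{\mathcal{S}}=\{(s,y_s):s\in\mathcal{S}\}$ and $g(\mathbf{y}_{\mathcal{S}})=f(\bigcup_{s\in\mathcal{S}}y_s)$. The conditional expected marginal gain is $\Delta_g(w\mid\mathbf{y}_{\mathcal{S}})=\sum_{y\in\mathcal{O}}P(Y_w=y\mid\mathbf{y}_{\mathcal{S}})\,[g(\mathbf{y}_{\mathcal{S}}\cup\{(w,y)\})-g(\mathbf{y}_{\mathcal{S}})]$. Users report bids $b_w\ge 0$; budget $\mathcal{B}>0$, parameter $\alpha\ge1$. Allocation policy of \textsc{SeqTGreedy}. Set $\mathcal{S}=\emptyset$, $\mathbf{y}_{\mathcal{S}}=\emptyset$, $\mathcal{W}'=\mathcal{W}$. While $\mathcal{W}'\ne\emptyset$: let $w^*\in\arg\max_{w\in\mathcal{W}'}\Delta_g(w\mid\mathbf{y}_{\mathcal{S}})/b_w$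 and $\Delta_{w^*}=\Delta_g(w^*\mid\mathbf{y}_{\mathcal{S}})$. If $\sum_{s\in\mathcal{S}}b_s+b_{w^*}\le\mathcal{B}$: if moreover $b_{w^*}\le\frac{\mathcal{B}}{\alpha}\cdot\frac{\Delta_{w^*}}{\sum_{s\in\mathcal{S}}\Delta_s+\Delta_{w^*}}$ then add $w^*$ to $\mathcal{S}$ (recording $\Delta_{w^*}$), observe $y_{w^*}$ (its value in the fixed realization $\mathbf{y}_{\mathcal{W}}$), add $(w^*,y_{w^*})$ to $\mathbf{y}_{\mathcal{S}}$, remove $w^*$ from $\mathcal{W}'$; otherwise stop. If the budget test fails, remove $w^*$ from $\mathcal{W}'$. *)

theory Defs
  imports "HOL-Probability.Probability"
begin

definition monotone_on_sets :: "'v set \<Rightarrow> ('v set \<Rightarrow> real) \<Rightarrow> bool" where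
  "monotone_on_sets V f \<longleftrightarrow> (\<forall>A B. A \<subseteq> B \<and> B \<subseteq> V \<longrightarrow> f A \<le> f B)"

definition submodular_on_sets :: "'v set \<Rightarrow> ('v set \<Rightarrow> real) \<Rightarrow> bool" where
  "submodular_on_sets V f \<longleftrightarrow>
     (\<forall>A B x. A \<subseteq> B \<and> B \<subseteq> V \<and> x \<in> V - B \<longrightarrow>
        f (insert x B) - f B \<le> f (insert x A) - f A)"

text \<open>Joint law of the independent profiles (Y_w)_{w in W}; outside W the value is {}.\<close>
definition joint :: "'w set \<Rightarrow> ('w \<Rightarrow> 'v set pmf) \<Rightarrow> ('w \<Rightarrow> 'v set) pmf" where
  "joint W p = Pi_pmf W {} p"

text \<open>P(Y_w = y | y_S), where y_S is given by the fixed realization yW restricted to S.\<close>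
definition cond_prob ::
  "'w set \<Rightarrow> ('w \<Rightarrow> 'v set pmf) \<Rightarrow> ('w \<Rightarrow> 'v set) \<Rightarrow> 'w set \<Rightarrow> 'w \<Rightarrow> 'v set \<Rightarrow> real" where
  "cond_prob W p yW S w y =
     measure_pmf.prob (joint W p) {\<omega>. \<omega> w = y \<and> (\<forall>s\<in>S. \<omega> s = yW s)}
     / measure_pmf.prob (joint W p) {\<omega>. \<forall>s\<in>S. \<omega> s = yW s}"

definition gval :: "('v set \<Rightarrow> real) \<Rightarrow> ('w \<Rightarrow> 'v set) \<Rightarrow> 'w set \<Rightarrow> real" where
  "gval f yW S = f (\<Union>s\<in>S. yW s)"

definition exp_gain ::
  "('v set \<Rightarrow> real) \<Rightarrow> 'v set set \<Rightarrow> 'w set \<Rightarrow> ('w \<Rightarrow> 'v set pmf) \<Rightarrow> ('w \<Rightarrow> 'v set)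
   \<Rightarrow> 'w set \<Rightarrow> 'w \<Rightarrow> real" where
  "exp_gain f Ob W p yW S w =
     (\<Sum>y\<in>Ob. cond_prob W p yW S w y * (f ((\<Union>s\<in>S. yW s) \<union> y) - gval f yW S))"

definition ratio :: "real \<Rightarrow> real \<Rightarrow> ereal" where
  "ratio d c = (if c = 0 then \<infinity> else ereal (d / c))"

text \<open>State: (selected users with recorded gains, in selection order; remaining W'; stopped).\<close>
type_synonym 'w st = "('w \<times> real) list \<times> 'w set \<times> bool"

definition pick_user ::
  "('v set \<Rightarrow> real) \<Rightarrow> 'v set set \<Rightarrow> 'w::linorder set \<Rightarrow> ('w \<Rightarrow> 'v set pmf) \<Rightarrow> ('w \<Rightarrow> 'v set)
   \<Rightarrow> ('w \<Rightarrow> real) \<Rightarrow> 'w set \<Rightarrow> 'w set \<Rightarrow> 'w" where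
  "pick_user f Ob W p yW b S W' =
     (LEAST w. w \<in> W' \<and>
        (\<forall>u\<in>W'. ratio (exp_gain f Ob W p yW S u) (b u) \<le> ratio (exp_gain f Ob W p yW S w) (b w)))"

definition step ::
  "('v set \<Rightarrow> real) \<Rightarrow> 'v set set \<Rightarrow> 'w::linorder set \<Rightarrow> ('w \<Rightarrow> 'v set pmf) \<Rightarrow> ('w \<Rightarrow> 'v set)
   \<Rightarrow> ('w \<Rightarrow> real) \<Rightarrow> real \<Rightarrow> real \<Rightarrow> 'w st \<Rightarrow> 'w st" where
  "step f Ob W p yW b B \<alpha> st =
    (case st of (sel, W', stopped) \<Rightarrow>
      if stopped \<or> W' = {} then st
      else
        let S = fst ` set sel;
            w = pick_user f Ob W p yW b S W';
            d = exp_gain f Ob W p yW S w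
        in if (\<Sum>s\<in>S. b s) + b w \<le> B then
             (if b w \<le> B / \<alpha> * (d / (sum_list (map snd sel) + d))
              then (sel @ [(w, d)], W' - {w}, False)
              else (sel, W', True))
           else (sel, W' - {w}, False))"

text \<open>Each non-stopping step removes a user from W', so card W steps reach the final state.\<close>
definition selected ::
  "('v set \<Rightarrow> real) \<Rightarrow> 'v set set \<Rightarrow> 'w::linorder set \<Rightarrow> ('w \<Rightarrow> 'v set pmf) \<Rightarrow> ('w \<Rightarrow> 'v set)
   \<Rightarrow> ('w \<Rightarrow> real) \<Rightarrow> real \<Rightarrow> real \<Rightarrow> 'w set" where
  "selected f Ob W p yW b B \<alpha> =
     fst ` set (fst ((step f Ob W p yW b B \<alpha> ^^ card W) ([], W, False)))"

end

theory Submission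
  imports Defs
begin

text \<open>Lowering the bid of user i only raises i's gain-per-bid ratio, so as long as the run with the
lower bid has not picked i, it makes exactly the same choices as the original run. If it picks i
at some round m no later than the round k at which the original run selected i, the tests still
pass: the users selected so far are a subset of those at round k, and i's expected gain at round m
is at least its gain at round k, because profiles are independent (conditioning on other users
does not change the law of Y_i) and f is submodular; the gain share test is monotone in both.\<close>

lemma marginal_gain_union_antimono:
  assumes "finite V" "monotone_on_sets V f" "submodular_on_sets V f"
    and "U \<subseteq> U'" "U' \<subseteq> V" "Y \<subseteq> V"
  shows "f (U' \<union> Y) - f U' \<le> f (U \<union> Y) - f U"
proof -
  have "finite Y" using assms(1,6) finite_subset by blast
  then show ?thesis using assms(6)
  proof (induction Y rule: finite_induct)
    case empty then show ?case by simp
  next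
    case (insert x Y)
    have xV: "x \<in> V" using insert.prems by simp
    have "f (insert x (U' \<union> Y)) - f (U' \<union> Y) \<le> f (insert x (U \<union> Y)) - f (U \<union> Y)"
    proof (cases "x \<in> U' \<union> Y")
      case True
      have "insert x (U \<union> Y) \<subseteq> V" using assms(4,5) xV insert.prems by auto
      then have "f (U \<union> Y) \<le> f (insert x (U \<union> Y))"
        by (rule assms(2)[unfolded monotone_on_sets_def, rule_format, OF conjI[OF subset_insertI]])
      moreover have "insert x (U' \<union> Y) = U' \<union> Y" using True by blast
      ultimately show ?thesis by simp
    next
      case False
      have "U \<union> Y \<subseteq> U' \<union> Y" "U' \<union> Y \<subseteq> V" "x \<in> V - (U' \<union> Y)"
        using False assms(4,5) xV insert.prems by auto
      then show ?thesis
        by (intro assms(3)[unfolded submodular_on_sets_def, rule_format] conjI)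
    qed
    with insert.IH insert.prems show ?case by simp
  qed
qed

lemma prob_joint_coordinate_indep:
  assumes "finite W" "i \<in> W" "i \<notin> S" "S \<subseteq> W"
  shows "measure_pmf.prob (joint W p) {\<omega>. \<omega> i = y \<and> (\<forall>s\<in>S. \<omega> s = z s)}
       = pmf (p i) y * measure_pmf.prob (joint W p) {\<omega>. \<forall>s\<in>S. \<omega> s = z s}"
proof -
  define C where "C x = (if x \<in> S then {z x} else UNIV)" for x
  define C' where "C' = C(i := {y})"
  have cyl: "{\<omega>. \<omega> i = y \<and> (\<forall>s\<in>S. \<omega> s = z s)} = Pi W C'"
    "{\<omega>. \<forall>s\<in>S. \<omega> s = z s} = Pi W C"
    using assms unfolding C_def C'_def Pi_def by auto
  have "(\<Prod>x\<in>W. measure_pmf.prob (p x) (C' x))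
      = measure_pmf.prob (p i) {y} * (\<Prod>x\<in>W - {i}. measure_pmf.prob (p x) (C x))"
    using assms by (simp add: prod.remove C'_def)
  also have "\<dots> = pmf (p i) y * (\<Prod>x\<in>W. measure_pmf.prob (p x) (C x))"
    using assms by (simp add: prod.remove C_def measure_pmf_single)
  finally show ?thesis
    unfolding cyl joint_def measure_Pi_pmf_Pi[OF assms(1)] .
qed

lemma least_argmax_exists:
  fixes r :: "'a \<Rightarrow> 'b::linorder"
  assumes "finite X" "X \<noteq> {}"
  shows "\<exists>w\<in>X. \<forall>u\<in>X. r u \<le> r w"
proof -
  have "Max (r ` X) \<in> r ` X" using assms by simp
  then obtain w where "w \<in> X" "r w = Max (r ` X)" by auto
  then show ?thesis using assms by (metis Max_ge finite_imageI image_eqI)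
qed

definition least_argmax :: "('a \<Rightarrow> 'b::linorder) \<Rightarrow> 'a::linorder set \<Rightarrow> 'a" where
  "least_argmax r X = (LEAST w. w \<in> X \<and> (\<forall>u\<in>X. r u \<le> r w))"

lemma
  assumes "finite X" "X \<noteq> {}"
  shows least_argmax_in: "least_argmax r X \<in> X"
    and least_argmax_max: "u \<in> X \<Longrightarrow> r u \<le> r (least_argmax r X)"
    and least_argmax_least: "w \<in> X \<Longrightarrow> \<forall>u\<in>X. r u \<le> r w \<Longrightarrow> least_argmax r X \<le> w"
proof -
  define M where "M = {w \<in> X. \<forall>u\<in>X. r u \<le> r w}"
  have "finite M" "M \<noteq> {}" using assms least_argmax_exists[OF assms] by (auto simp: M_def)
  then have Min: "Min M \<in> M" "\<And>w. w \<in> M \<Longrightarrow> Min M \<le> w" by simp_all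
  have "least_argmax r X = Min M"
    unfolding least_argmax_def by (rule Least_equality) (use Min in \<open>auto simp: M_def\<close>)
  with Min show "least_argmax r X \<in> X" "u \<in> X \<Longrightarrow> r u \<le> r (least_argmax r X)"
    "w \<in> X \<Longrightarrow> \<forall>u\<in>X. r u \<le> r w \<Longrightarrow> least_argmax r X \<le> w"
    by (auto simp: M_def)
qed

lemma least_argmax_raise_one:
  assumes "finite X" "X \<noteq> {}" "\<forall>u\<in>X. u \<noteq> i \<longrightarrow> r' u = r u" "r i \<le> r' i"
    and "least_argmax r' X \<noteq> i"
  shows "least_argmax r' X = least_argmax r X"
proof -
  define w' where "w' = least_argmax r' X"
  define w where "w = least_argmax r X"
  note max' = least_argmax_max[OF assms(1,2), of _ r'] and max = least_argmax_max[OF assms(1,2), of _ r]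
  have w'X: "w' \<in> X" and wX: "w \<in> X" unfolding w'_def w_def by (simp_all add: least_argmax_in assms)
  have r_le_r': "u \<in> X \<Longrightarrow> r u \<le> r' u" for u using assms(3,4) by (cases "u = i") auto
  have r'w': "r' w' = r w'" using assms(3,5) w'X w'_def by auto
  have "\<forall>u\<in>X. r u \<le> r w'" using r_le_r' max' r'w' w'_def by (metis order.trans)
  then have "w \<le> w'" using least_argmax_least[OF assms(1,2) w'X] w_def by simp
  moreover have "\<forall>u\<in>X. r' u \<le> r' w"
    using max' max r'w' r_le_r' assms(3) w'X wX unfolding w'_def w_def by (metis order.trans)
  then have "w' \<le> w" using least_argmax_least[OF assms(1,2) wX] w'_def by simp
  ultimately show ?thesis unfolding w_def w'_def by simp
qed

lemma ratio_antimono: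
  assumes "0 \<le> d" "0 \<le> c'" "c' \<le> c"
  shows "ratio d c \<le> ratio d c'"
proof (cases "c' = 0")
  case False
  then have "0 < c'" "0 < c" using assms by auto
  then show ?thesis using assms by (simp add: ratio_def divide_left_mono)
qed (simp add: ratio_def)

lemma share_test_mono:
  fixes c d d' D D' x x' :: real
  assumes "0 < c" "0 \<le> d" "d \<le> d'" "0 \<le> D'" "D' \<le> D" "0 \<le> x'" "x' \<le> x"
    and "x \<le> c * (d / (D + d))"
  shows "x' \<le> c * (d' / (D' + d'))"
proof (cases "d = 0")
  case True
  have "0 \<le> c * (d' / (D' + d'))" using assms by (intro mult_nonneg_nonneg divide_nonneg_nonneg) auto
  moreover have "x \<le> 0" using assms(8) True by simp
  ultimately show ?thesis using assms(7) by linarith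
next
  case False
  then have "d * D' \<le> d' * D" using assms by (meson mult_mono order.trans less_eq_real_def)
  then have "d / (D + d) \<le> d' / (D' + d')"
    using False assms by (simp add: divide_simps) (simp add: algebra_simps)
  then show ?thesis using assms mult_left_mono[of _ _ c] by fastforce
qed

lemma funpow_extends_fst:
  fixes g :: "'a list \<times> 'b \<Rightarrow> 'a list \<times> 'b"
  assumes "\<And>s. \<exists>zs. fst (g s) = fst s @ zs" "m \<le> n"
  shows "\<exists>zs. fst ((g ^^ n) x) = fst ((g ^^ m) x) @ zs"
  using assms(2)
proof (induction n rule: dec_induct)
  case (step n)
  then show ?case using assms(1)[of "(g ^^ n) x"] by force
qed simp

lemma nat_becomes_true:
  assumes "\<not> P (0::nat)" "P n"
  shows "\<exists>k<n. \<not> P k \<and> P (Suc k)"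
  using assms by (induction n) (auto intro: less_SucI)

lemma step_extends_selection: "\<exists>zs. fst (step f Ob W p yW b B \<alpha> s) = fst s @ zs"
  by (cases s) (auto simp: step_def Let_def)

lemma step_selects:
  assumes "i \<notin> fst ` set sel" "i \<in> fst ` set (fst (step f Ob W p yW b B \<alpha> (sel, W', st)))"
  shows "pick_user f Ob W p yW b (fst ` set sel) W' = i"
    and "(\<Sum>s\<in>fst ` set sel. b s) + b i \<le> B"
    and "b i \<le> B / \<alpha> * (exp_gain f Ob W p yW (fst ` set sel) i /
        (sum_list (map snd sel) + exp_gain f Ob W p yW (fst ` set sel) i))"
  using assms unfolding step_def by (auto simp: Let_def split: if_splits)

lemma step_selects_if:
  assumes "\<not> st" "W' \<noteq> {}" "pick_user f Ob W p yW b (fst ` set sel) W' = i"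
    and "(\<Sum>s\<in>fst ` set sel. b s) + b i \<le> B"
    and "b i \<le> B / \<alpha> * (exp_gain f Ob W p yW (fst ` set sel) i /
        (sum_list (map snd sel) + exp_gain f Ob W p yW (fst ` set sel) i))"
  shows "i \<in> fst ` set (fst (step f Ob W p yW b B \<alpha> (sel, W', st)))"
  using assms unfolding step_def by (auto simp: Let_def)

lemma step_cong_bids:
  assumes "pick_user f Ob W p yW b (fst ` set sel) W' = w" "pick_user f Ob W p yW b' (fst ` set sel) W' = w"
    and "(\<Sum>s\<in>fst ` set sel. b s) = (\<Sum>s\<in>fst ` set sel. b' s)" "b w = b' w"
  shows "step f Ob W p yW b B \<alpha> (sel, W', st) = step f Ob W p yW b' B \<alpha> (sel, W', st)"
  using assms unfolding step_def by (simp add: Let_def)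

locale seq_greedy =
  fixes V :: "'v set" and f :: "'v set \<Rightarrow> real" and Ob :: "'v set set"
    and W :: "'w::linorder set" and p :: "'w \<Rightarrow> 'v set pmf" and yW :: "'w \<Rightarrow> 'v set"
  assumes finite_V: "finite V" and mono_f: "monotone_on_sets V f"
    and submod_f: "submodular_on_sets V f"
    and finite_W: "finite W" and Ob_subset: "Ob \<subseteq> Pow V" and yW_in_Ob: "\<forall>w\<in>W. yW w \<in> Ob"
begin

abbreviation gain :: "'w set \<Rightarrow> 'w \<Rightarrow> real" where
  "gain \<equiv> exp_gain f Ob W p yW"

lemma observed_subset_V: "S \<subseteq> W \<Longrightarrow> (\<Union>s\<in>S. yW s) \<subseteq> V"
  using yW_in_Ob Ob_subset by blast

lemma marginal_gain_nonneg:
  assumes "S \<subseteq> W" "y \<in> Ob"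
  shows "0 \<le> f ((\<Union>s\<in>S. yW s) \<union> y) - f (\<Union>s\<in>S. yW s)"
proof -
  have "(\<Union>s\<in>S. yW s) \<union> y \<subseteq> V" using observed_subset_V[OF assms(1)] assms(2) Ob_subset by blast
  then show ?thesis
    using mono_f[unfolded monotone_on_sets_def, rule_format, OF conjI[OF Un_upper1]] by simp
qed

lemma gain_nonneg: "S \<subseteq> W \<Longrightarrow> 0 \<le> gain S u"
  unfolding exp_gain_def gval_def cond_prob_def
  by (intro sum_nonneg mult_nonneg_nonneg marginal_gain_nonneg) auto

lemma cond_prob_indep:
  assumes "i \<in> W" "i \<notin> S" "S \<subseteq> W"
  shows "cond_prob W p yW S i y =
    (if measure_pmf.prob (joint W p) {\<omega>. \<forall>s\<in>S. \<omega> s = yW s} = 0 then 0 else pmf (p i) y)"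
  unfolding cond_prob_def prob_joint_coordinate_indep[OF finite_W assms] by simp

lemma gain_antimono:
  assumes "S \<subseteq> T" "T \<subseteq> W" "i \<in> W" "i \<notin> T"
  shows "gain T i \<le> gain S i"
  unfolding exp_gain_def gval_def
proof (rule sum_mono)
  fix y assume y: "y \<in> Ob"
  let ?P = "\<lambda>S. measure_pmf.prob (joint W p) {\<omega>. \<forall>s\<in>S. \<omega> s = yW s}"
  have SW: "S \<subseteq> W" "i \<notin> S" using assms by auto
  have marginal: "f ((\<Union>s\<in>T. yW s) \<union> y) - f (\<Union>s\<in>T. yW s) \<le> f ((\<Union>s\<in>S. yW s) \<union> y) - f (\<Union>s\<in>S. yW s)"
    using assms(1) y Ob_subset observed_subset_V[OF assms(2)]
    by (intro marginal_gain_union_antimono[OF finite_V mono_f submod_f]) auto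
  have "?P T \<le> ?P S" using assms(1) by (intro measure_pmf.finite_measure_mono) auto
  then have "?P T \<noteq> 0 \<Longrightarrow> ?P S \<noteq> 0"
    using measure_nonneg[of "measure_pmf (joint W p)" "{\<omega>. \<forall>s\<in>T. \<omega> s = yW s}"] by linarith
  then consider "cond_prob W p yW T i y = 0" | "cond_prob W p yW T i y = cond_prob W p yW S i y"
    unfolding cond_prob_indep[OF assms(3,4,2)] cond_prob_indep[OF assms(3) SW(2,1)] by (cases "?P T = 0") auto
  then show "cond_prob W p yW T i y * (f ((\<Union>s\<in>T. yW s) \<union> y) - f (\<Union>s\<in>T. yW s))
     \<le> cond_prob W p yW S i y * (f ((\<Union>s\<in>S. yW s) \<union> y) - f (\<Union>s\<in>S. yW s))"
  proof cases
    case 1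
    have "0 \<le> cond_prob W p yW S i y" by (simp add: cond_prob_def)
    with 1 show ?thesis
      using marginal_gain_nonneg[OF SW(1) y] by simp
  next
    case 2
    have "0 \<le> cond_prob W p yW S i y" by (simp add: cond_prob_def)
    with 2 show ?thesis using marginal by (simp add: mult_left_mono)
  qed
qed

lemma pick_user_least_argmax:
  "pick_user f Ob W p yW b S W' = least_argmax (\<lambda>u. ratio (gain S u) (b u)) W'"
  unfolding pick_user_def least_argmax_def ..

lemma pick_user_in: "W' \<subseteq> W \<Longrightarrow> W' \<noteq> {} \<Longrightarrow> pick_user f Ob W p yW b S W' \<in> W'"
  unfolding pick_user_least_argmax by (rule least_argmax_in) (use finite_W finite_subset in auto)

definition wf_selection :: "('w \<times> real) list \<Rightarrow> bool" where
  "wf_selection sel \<longleftrightarrow> fst ` set sel \<subseteq> W \<and> (\<forall>x\<in>set sel. 0 \<le> snd x)"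

definition wf_state :: "'w st \<Rightarrow> bool" where
  "wf_state s \<longleftrightarrow> fst (snd s) \<subseteq> W \<and> wf_selection (fst s)"

lemma wf_state_step:
  assumes "wf_state s"
  shows "wf_state (step f Ob W p yW b B \<alpha> s)"
proof -
  obtain sel W' st where s: "s = (sel, W', st)" by (cases s)
  have W'W: "W' \<subseteq> W" and SW: "fst ` set sel \<subseteq> W" and nonneg: "\<forall>x\<in>set sel. 0 \<le> snd x"
    using assms by (auto simp: s wf_state_def wf_selection_def)
  have "W' \<noteq> {} \<Longrightarrow> pick_user f Ob W p yW b (fst ` set sel) W' \<in> W"
    using pick_user_in W'W by blast
  then show ?thesis
    unfolding s step_def wf_state_def wf_selection_def
    using W'W SW nonneg gain_nonneg[OF SW] by (auto simp: Let_def)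
qed

lemma wf_state_run: "wf_state ((step f Ob W p yW b B \<alpha> ^^ n) ([], W, False))"
  by (induction n) (simp add: wf_state_def wf_selection_def, simp add: wf_state_step)

end

locale bid_lowering = seq_greedy V f Ob W p yW
  for V :: "'v set" and f Ob and W :: "'w::linorder set" and p yW +
  fixes b b' :: "'w \<Rightarrow> real" and B \<alpha> :: real and i :: 'w
  assumes B_pos: "B > 0" and alpha_ge_1: "\<alpha> \<ge> 1" and bids_nonneg: "\<forall>w\<in>W. b w \<ge> 0"
    and i_in_W: "i \<in> W" and lowered: "0 \<le> b' i" "b' i \<le> b i"
    and others_same: "\<forall>w\<in>W. w \<noteq> i \<longrightarrow> b' w = b w"
begin

text \<open>Here \<open>sel @ zs\<close> is the selection at the round where the original run selects i.\<close>

lemma step_lowered_bid: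
  assumes wf: "wf_state (sel, W', st)" "wf_selection (sel @ zs)"
    and i_new: "i \<notin> fst ` set (sel @ zs)"
    and budget: "(\<Sum>s\<in>fst ` set (sel @ zs). b s) + b i \<le> B"
    and share: "b i \<le> B / \<alpha> * (gain (fst ` set (sel @ zs)) i /
        (sum_list (map snd (sel @ zs)) + gain (fst ` set (sel @ zs)) i))"
  shows "i \<in> fst ` set (fst (step f Ob W p yW b' B \<alpha> (sel, W', st)))
    \<or> step f Ob W p yW b' B \<alpha> (sel, W', st) = step f Ob W p yW b B \<alpha> (sel, W', st)"
proof (cases "st \<or> W' = {}")
  case True
  then show ?thesis by (auto simp: step_def)
next
  case False
  let ?S = "fst ` set sel" and ?T = "fst ` set (sel @ zs)"
  have W'W: "W' \<subseteq> W" and SW: "?S \<subseteq> W" and TW: "?T \<subseteq> W"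
    using wf by (auto simp: wf_state_def wf_selection_def)
  have i_S: "i \<notin> ?S" using i_new by auto
  have sum_eq: "(\<Sum>s\<in>?S. b s) = (\<Sum>s\<in>?S. b' s)"
  proof (rule sum.cong[OF refl])
    fix u assume "u \<in> ?S"
    then have "u \<in> W" "u \<noteq> i" using SW i_S by auto
    then show "b u = b' u" using others_same by simp
  qed
  show ?thesis
  proof (cases "pick_user f Ob W p yW b' ?S W' = i")
    case True
    have "(\<Sum>s\<in>?S. b' s) \<le> (\<Sum>s\<in>?T. b s)"
      unfolding sum_eq[symmetric] using TW bids_nonneg by (intro sum_mono2) auto
    then have "(\<Sum>s\<in>?S. b' s) + b' i \<le> B" using budget lowered by linarith
    moreover have "b' i \<le> B / \<alpha> * (gain ?S i / (sum_list (map snd sel) + gain ?S i))"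
    proof (rule share_test_mono[OF _ _ _ _ _ lowered share])
      show "0 < B / \<alpha>" using B_pos alpha_ge_1 by simp
      show "0 \<le> gain ?T i" using gain_nonneg[OF TW] .
      show "gain ?T i \<le> gain ?S i" by (rule gain_antimono[OF _ TW i_in_W i_new]) auto
      show "0 \<le> sum_list (map snd sel)" "sum_list (map snd sel) \<le> sum_list (map snd (sel @ zs))"
        using wf(2) by (auto simp: wf_selection_def intro!: sum_list_nonneg)
    qed
    ultimately show ?thesis using False True by (auto intro: step_selects_if)
  next
    case False
    have "pick_user f Ob W p yW b' ?S W' = pick_user f Ob W p yW b ?S W'"
      unfolding pick_user_least_argmax
    proof (rule least_argmax_raise_one)
      show "finite W'" using W'W finite_W finite_subset by blast
      show "\<forall>u\<in>W'. u \<noteq> i \<longrightarrow> ratio (gain ?S u) (b' u) = ratio (gain ?S u) (b u)"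
        using W'W others_same by auto
      show "ratio (gain ?S i) (b i) \<le> ratio (gain ?S i) (b' i)"
        using ratio_antimono[OF gain_nonneg[OF SW] lowered] .
    qed (use \<open>\<not> (st \<or> W' = {})\<close> False in \<open>simp_all add: pick_user_least_argmax\<close>)
    moreover have "pick_user f Ob W p yW b' ?S W' \<in> W"
      using pick_user_in W'W \<open>\<not> (st \<or> W' = {})\<close> by blast
    ultimately show ?thesis
      using step_cong_bids[OF _ _ sum_eq] others_same False by (metis (no_types, lifting))
  qed
qed

lemma selected_lowered_bid:
  assumes "i \<in> selected f Ob W p yW b B \<alpha>"
  shows "i \<in> selected f Ob W p yW b' B \<alpha>"
proof -
  define old where "old n = (step f Ob W p yW b B \<alpha> ^^ n) ([], W, False)" for n
  define new where "new n = (step f Ob W p yW b' B \<alpha> ^^ n) ([], W, False)" for n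
  define chosen :: "'w st \<Rightarrow> 'w set" where "chosen s = fst ` set (fst s)" for s
  have old_extends: "m \<le> n \<Longrightarrow> \<exists>zs. fst (old n) = fst (old m) @ zs" for m n
    unfolding old_def by (rule funpow_extends_fst[OF step_extends_selection])
  have new_extends: "m \<le> n \<Longrightarrow> \<exists>zs. fst (new n) = fst (new m) @ zs" for m n
    unfolding new_def by (rule funpow_extends_fst[OF step_extends_selection])
  have "\<exists>k<card W. i \<notin> chosen (old k) \<and> i \<in> chosen (old (Suc k))"
    by (rule nat_becomes_true) (use assms in \<open>simp_all add: chosen_def old_def selected_def\<close>)
  then obtain k where k: "k < card W" "i \<notin> chosen (old k)" "i \<in> chosen (old (Suc k))"
    by blast
  obtain selk Wk stk where old_k: "old k = (selk, Wk, stk)" by (cases "old k")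
  have old_Suc: "old (Suc n) = step f Ob W p yW b B \<alpha> (old n)" for n
    unfolding old_def by simp
  have wf_old: "wf_state (old n)" for n unfolding old_def by (rule wf_state_run)
  have i_k: "i \<notin> fst ` set selk" using k(2) old_k by (simp add: chosen_def)
  have "i \<in> fst ` set (fst (step f Ob W p yW b B \<alpha> (selk, Wk, stk)))"
    using k(3) old_k old_Suc[of k] by (simp add: chosen_def)
  note tests_k = step_selects[OF i_k this]
  have wf_k: "wf_selection selk" using wf_old[of k] old_k by (simp add: wf_state_def)
  have "new m = old m \<or> i \<in> chosen (new m)" if "m \<le> Suc k" for m
    using that
  proof (induction m)
    case (Suc m)
    have new_Suc: "new (Suc m) = step f Ob W p yW b' B \<alpha> (new m)" unfolding new_def by simp
    consider "new m = old m" | "i \<in> chosen (new m)" using Suc by auto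
    then show ?case
    proof cases
      case 1
      obtain sel W' st where old_m: "old m = (sel, W', st)" by (cases "old m")
      obtain zs where selk: "selk = sel @ zs" using old_extends[of m k] Suc.prems old_m old_k by auto
      have "i \<in> chosen (new (Suc m)) \<or> new (Suc m) = old (Suc m)"
        using step_lowered_bid[OF wf_old[of m, unfolded old_m] wf_k[unfolded selk]
            i_k[unfolded selk] tests_k(2,3)[unfolded selk]]
        unfolding new_Suc old_Suc 1 old_m chosen_def by simp
      then show ?thesis by auto
    next
      case 2
      then show ?thesis using step_extends_selection new_Suc unfolding chosen_def by (metis Un_iff image_Un set_append)
    qed
  qed (simp add: new_def old_def)
  then have "i \<in> chosen (new (Suc k))" using k(3) by (metis order.refl)
  then show ?thesis
    using new_extends[of "Suc k" "card W"] k(1) by (auto simp: selected_def chosen_def new_def)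
qed

end

theorem lemma1:
  fixes V :: "'v set" and f :: "'v set \<Rightarrow> real" and Ob :: "'v set set"
    and W :: "'w::linorder set" and p :: "'w \<Rightarrow> 'v set pmf" and yW :: "'w \<Rightarrow> 'v set"
    and b b' :: "'w \<Rightarrow> real" and B \<alpha> :: real and i :: 'w
  assumes "finite V"
    and "monotone_on_sets V f" and "submodular_on_sets V f" and "\<forall>A\<subseteq>V. f A \<ge> 0"
    and "finite W" and "Ob \<subseteq> Pow V"
    and "\<forall>w\<in>W. set_pmf (p w) \<subseteq> Ob"
    and "\<forall>w\<in>W. yW w \<in> Ob"
    and "B > 0" and "\<alpha> \<ge> 1"
    and "\<forall>w\<in>W. b w \<ge> 0"
    and "i \<in> W" and "0 \<le> b' i" and "b' i \<le> b i"
    and "\<forall>w\<in>W. w \<noteq> i \<longrightarrow> b' w = b w"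
    and "i \<in> selected f Ob W p yW b B \<alpha>"
  shows "i \<in> selected f Ob W p yW b' B \<alpha>"
proof -
  interpret bid_lowering V f Ob W p yW b b' B \<alpha> i
    using assms by unfold_locales auto
  show ?thesis using selected_lowered_bid assms(16) .
qed

end
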